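(* Let $M$ be a free $\mathbb{T}$-module with a finite $\mathbb{T}$-basis, $V$ its associated complex vector space, and $(\cdot,\cdot)$ a bicomplex scalar product on $M$ which is hyperbolic positive and closed on $V$. Then $V$ equipped with the restriction of $(\cdot,\cdot)$ is a complex (over $\mathbb{C}(\mathbf{i_1})$) pre-Hilbert space (inner product space).
   Context: Bicomplex numbers: $\mathbb{T}=\{z_1+z_2\mathbf{i_2}: z_1,z_2\in\mathbb{C}(\mathbf{i_1})\}$, $\mathbb{C}(\mathbf{i_1})=\{x+y\mathbf{i_1}: x,y\in\mathbb{R}\}$, $\mathbf{i_1}^2=\mathbf{i_2}^2=-1$, $\mathbf{i_1}\mathbf{i_2}=\mathbf{i_2}\mathbf{i_1}=\mathbf{j}$, $\mathbf{j}^2=1$ (commutative). Hyperbolic numbers $\mathbb{D}=\{x+y\mathbf{j}:x,y\in\mathbb{R}\}$. Idempotents $\mathbf{e_1}=(1+\mathbf{j})/2$, $\mathbf{e_2}=(1-\mathbf{j})/2$. Conjugation: $(z_1+z_2\mathbf{i_2})^{\dagger_3}=\overline{z_1}-\overline{z_2}\mathbf{i_2}$. $\mathbb{D}^+=\{a\mathbf{e_1}+b\mathbf{e_2}: a,b\ge 0\}$. $M$ has $\mathbb{T}$-basis $\{\widehat m_1,\dots,\widehat m_n\}$ and $V=\{\sum x_l\widehat m_l: x_l\in\mathbb{C}(\mathbf{i_1})\}$. A bicomplex scalar product is a map $(\cdot,\cdot):M\times M\to\mathbb{T}$ with: $(\widehat X,\widehat Y_1+\widehat Y_2)=(\widehat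 X,\widehat Y_1)+(\widehat X,\widehat Y_2)$; $(\widehat X,\alpha\widehat Y)=\alpha(\widehat X,\widehat Y)$ for $\alpha\in\mathbb{T}$; $(\widehat X,\widehat Y)=(\widehat Y,\widehat X)^{\dagger_3}$; $(\widehat X,\widehat X)=0\iff\widehat X=0$. Hyperbolic positive: $(\widehat X,\widehat X)\in\mathbb{D}^+$ for all $\widehat X\in M$. Closed on $V$: $(\widehat X,\widehat Y)\in\mathbb{C}(\mathbf{i_1})$ for all $\widehat X,\widehat Y\in V$. *)

theory Defs
  imports Complex_Main
begin

text \<open>Bicomplex numbers: BC z1 z2 represents z1 + z2 i2 with z1, z2 in C(i1)
  (Isabelle's complex type plays the role of C(i1), with i1 = \<i>).\<close>
datatype bicomplex = BC (bc1: complex) (bc2: complex)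

instantiation bicomplex :: "{zero, one, plus, uminus, minus, times}"
begin
definition "0 = BC 0 0"
definition "1 = BC 1 0"
definition "x + y = BC (bc1 x + bc1 y) (bc2 x + bc2 y)"
definition "- x = BC (- bc1 x) (- bc2 x)"
definition "x - y = BC (bc1 x - bc1 y) (bc2 x - bc2 y)"
text \<open>(z1 + z2 i2)(w1 + w2 i2) = (z1 w1 - z2 w2) + (z1 w2 + z2 w1) i2, since i2^2 = -1.\<close>
definition "x * y = BC (bc1 x * bc1 y - bc2 x * bc2 y) (bc1 x * bc2 y + bc2 x * bc1 y)"
instance ..
end

definition conj3 :: "bicomplex \<Rightarrow> bicomplex" where
  "conj3 x = BC (cnj (bc1 x)) (- cnj (bc2 x))"

text \<open>Embedding of C(i1) into T, and the bicomplex unit j = i1 i2.\<close>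
definition bc_of_complex :: "complex \<Rightarrow> bicomplex" where
  "bc_of_complex z = BC z 0"

definition bc_j :: bicomplex where "bc_j = BC 0 \<i>"

definition bc_e1 :: bicomplex where "bc_e1 = BC (1/2) (\<i>/2)"   \<comment> \<open>(1+j)/2\<close>
definition bc_e2 :: bicomplex where "bc_e2 = BC (1/2) (-\<i>/2)"  \<comment> \<open>(1-j)/2\<close>

definition hyperbolic_nonneg :: "bicomplex set" where
  "hyperbolic_nonneg = {bc_of_complex (of_real a) * bc_e1 + bc_of_complex (of_real b) * bc_e2
                          | a b. a \<ge> 0 \<and> b \<ge> 0}"

text \<open>The free T-module M with finite T-basis {m_l : l in 'n} is represented by its
  coordinates: M = ('n \<Rightarrow> bicomplex), the basis being the standard one.\<close>
definition m_add :: "('n \<Rightarrow> bicomplex) \<Rightarrow> ('n \<Rightarrow> bicomplex) \<Rightarrow> ('n \<Rightarrow> bicomplex)" where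
  "m_add X Y = (\<lambda>l. X l + Y l)"

definition m_smul :: "bicomplex \<Rightarrow> ('n \<Rightarrow> bicomplex) \<Rightarrow> ('n \<Rightarrow> bicomplex)" where
  "m_smul \<alpha> X = (\<lambda>l. \<alpha> * X l)"

definition m_zero :: "'n \<Rightarrow> bicomplex" where "m_zero = (\<lambda>l. 0)"

text \<open>V = {sum x_l m_l : x_l in C(i1)}.\<close>
definition V_space :: "('n \<Rightarrow> bicomplex) set" where
  "V_space = {X. \<forall>l. bc2 (X l) = 0}"

definition bicomplex_scalar_product ::
  "(('n::finite \<Rightarrow> bicomplex) \<Rightarrow> ('n \<Rightarrow> bicomplex) \<Rightarrow> bicomplex) \<Rightarrow> bool" where
  "bicomplex_scalar_product sp \<longleftrightarrow>
     (\<forall>X Y1 Y2. sp X (m_add Y1 Y2) = sp X Y1 + sp X Y2) \<and>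
     (\<forall>X Y \<alpha>. sp X (m_smul \<alpha> Y) = \<alpha> * sp X Y) \<and>
     (\<forall>X Y. sp X Y = conj3 (sp Y X)) \<and>
     (\<forall>X. sp X X = 0 \<longleftrightarrow> X = m_zero)"

definition hyperbolic_positive ::
  "(('n \<Rightarrow> bicomplex) \<Rightarrow> ('n \<Rightarrow> bicomplex) \<Rightarrow> bicomplex) \<Rightarrow> bool" where
  "hyperbolic_positive sp \<longleftrightarrow> (\<forall>X. sp X X \<in> hyperbolic_nonneg)"

definition closed_on_V ::
  "(('n \<Rightarrow> bicomplex) \<Rightarrow> ('n \<Rightarrow> bicomplex) \<Rightarrow> bicomplex) \<Rightarrow> bool" where
  "closed_on_V sp \<longleftrightarrow> (\<forall>X\<in>V_space. \<forall>Y\<in>V_space. bc2 (sp X Y) = 0)"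

definition V_emb :: "('n \<Rightarrow> complex) \<Rightarrow> ('n \<Rightarrow> bicomplex)" where
  "V_emb x = (\<lambda>l. bc_of_complex (x l))"

text \<open>Complex pre-Hilbert (inner product) space structure on 'n \<Rightarrow> complex,
  with the convention (as in the bicomplex scalar product) of linearity in the second argument.\<close>
definition complex_inner_product ::
  "(('n \<Rightarrow> complex) \<Rightarrow> ('n \<Rightarrow> complex) \<Rightarrow> complex) \<Rightarrow> bool" where
  "complex_inner_product ip \<longleftrightarrow>
     (\<forall>x y z. ip x (\<lambda>l. y l + z l) = ip x y + ip x z) \<and>
     (\<forall>x y a. ip x (\<lambda>l. a * y l) = a * ip x y) \<and>
     (\<forall>x y. ip x y = cnj (ip y x)) \<and>
     (\<forall>x. ip x x \<in> \<real> \<and> Re (ip x x) \<ge> 0) \<and>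
     (\<forall>x. ip x x = 0 \<longleftrightarrow> x = (\<lambda>l. 0))"

end

theory Submission
  imports Defs
begin

text \<open>Closedness on V says that the first component of the scalar product already determines
  it on V, so the candidate inner product is the first component of the restriction. A hyperbolic positive
  element a e1 + b e2 has second component (a - b) i1/2, so closedness forces a = b and the
  value on the diagonal is the non-negative real a.\<close>

lemma bicomplex_eq_iff: "x = y \<longleftrightarrow> bc1 x = bc1 y \<and> bc2 x = bc2 y"
  by (cases x; cases y) auto

lemma bc1_plus [simp]: "bc1 (x + y) = bc1 x + bc1 y"
  by (simp add: plus_bicomplex_def)

lemma bc1_bc_of_complex_mult [simp]: "bc1 (bc_of_complex a * x) = a * bc1 x"
  by (simp add: bc_of_complex_def times_bicomplex_def)

lemma bc1_conj3 [simp]: "bc1 (conj3 x) = cnj (bc1 x)"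
  by (simp add: conj3_def)

lemma bc_of_complex_eq_zero_iff [simp]: "bc_of_complex z = 0 \<longleftrightarrow> z = 0"
  by (simp add: bc_of_complex_def zero_bicomplex_def)

lemma hyperbolic_nonneg_bc2_zero:
  assumes "h \<in> hyperbolic_nonneg" and "bc2 h = 0"
  obtains r :: real where "r \<ge> 0" and "h = bc_of_complex (of_real r)"
proof -
  obtain a b :: real where "a \<ge> 0" "b \<ge> 0"
    and h: "h = bc_of_complex (of_real a) * bc_e1 + bc_of_complex (of_real b) * bc_e2"
    using assms(1) unfolding hyperbolic_nonneg_def by blast
  then have h_components: "h = BC (of_real ((a + b) / 2)) (\<i> * of_real ((a - b) / 2))"
    by (simp add: bc_of_complex_def bc_e1_def bc_e2_def times_bicomplex_def
        plus_bicomplex_def field_simps)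
  with assms(2) have "a = b"
    by simp
  with h_components have "h = bc_of_complex (of_real a)"
    by (simp add: bc_of_complex_def)
  with \<open>a \<ge> 0\<close> show thesis
    by (rule that)
qed

lemma V_emb_in_V_space: "V_emb x \<in> V_space"
  by (simp add: V_emb_def V_space_def bc_of_complex_def)

lemma V_emb_add: "V_emb (\<lambda>l. x l + y l) = m_add (V_emb x) (V_emb y)"
  by (simp add: V_emb_def m_add_def bc_of_complex_def plus_bicomplex_def)

lemma V_emb_mult: "V_emb (\<lambda>l. a * x l) = m_smul (bc_of_complex a) (V_emb x)"
  by (simp add: V_emb_def m_smul_def bc_of_complex_def times_bicomplex_def)

lemma V_emb_eq_m_zero_iff: "V_emb x = m_zero \<longleftrightarrow> x = (\<lambda>l. 0)"
  by (auto simp: V_emb_def m_zero_def fun_eq_iff bc_of_complex_def zero_bicomplex_def)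

context
  fixes sp :: "('n::finite \<Rightarrow> bicomplex) \<Rightarrow> ('n \<Rightarrow> bicomplex) \<Rightarrow> bicomplex"
  assumes sp: "bicomplex_scalar_product sp"
begin

lemma scalar_product_add_right: "sp X (m_add Y Z) = sp X Y + sp X Z"
  using sp unfolding bicomplex_scalar_product_def by blast

lemma scalar_product_smul_right: "sp X (m_smul \<alpha> Y) = \<alpha> * sp X Y"
  using sp unfolding bicomplex_scalar_product_def by blast

lemma scalar_product_conj3_commute: "sp X Y = conj3 (sp Y X)"
  using sp unfolding bicomplex_scalar_product_def by blast

lemma scalar_product_self_eq_zero_iff: "sp X X = 0 \<longleftrightarrow> X = m_zero"
  using sp unfolding bicomplex_scalar_product_def by blast

end

definition restrict_to_V ::
  "(('n \<Rightarrow> bicomplex) \<Rightarrow> ('n \<Rightarrow> bicomplex) \<Rightarrow> bicomplex) \<Rightarrow>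
   ('n \<Rightarrow> complex) \<Rightarrow> ('n \<Rightarrow> complex) \<Rightarrow> complex" where
  "restrict_to_V sp x y = bc1 (sp (V_emb x) (V_emb y))"

lemma scalar_product_V_emb:
  assumes "closed_on_V sp"
  shows "sp (V_emb x) (V_emb y) = bc_of_complex (restrict_to_V sp x y)"
proof -
  have "bc2 (sp (V_emb x) (V_emb y)) = 0"
    using assms V_emb_in_V_space unfolding closed_on_V_def by blast
  then show ?thesis
    by (simp add: bicomplex_eq_iff restrict_to_V_def bc_of_complex_def)
qed

lemma complex_inner_product_restrict_to_V:
  fixes sp :: "('n::finite \<Rightarrow> bicomplex) \<Rightarrow> ('n \<Rightarrow> bicomplex) \<Rightarrow> bicomplex"
  assumes sp: "bicomplex_scalar_product sp"
    and positive: "hyperbolic_positive sp"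
    and closed: "closed_on_V sp"
  shows "complex_inner_product (restrict_to_V sp)"
proof -
  let ?ip = "restrict_to_V sp"
  have add: "?ip x (\<lambda>l. y l + z l) = ?ip x y + ?ip x z" for x y z
    by (simp add: restrict_to_V_def V_emb_add scalar_product_add_right[OF sp])
  have mult: "?ip x (\<lambda>l. a * y l) = a * ?ip x y" for x y a
    by (simp add: restrict_to_V_def V_emb_mult scalar_product_smul_right[OF sp])
  have conj_sym: "?ip x y = cnj (?ip y x)" for x y
    unfolding restrict_to_V_def
    by (subst scalar_product_conj3_commute[OF sp]) (rule bc1_conj3)
  have nonneg: "?ip x x \<in> \<real> \<and> Re (?ip x x) \<ge> 0" for x
  proof -
    have "sp (V_emb x) (V_emb x) \<in> hyperbolic_nonneg"
      using positive unfolding hyperbolic_positive_def by blast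
    moreover have "bc2 (sp (V_emb x) (V_emb x)) = 0"
      by (simp add: scalar_product_V_emb[OF closed] bc_of_complex_def)
    ultimately obtain r :: real
      where "r \<ge> 0" and "sp (V_emb x) (V_emb x) = bc_of_complex (of_real r)"
      by (rule hyperbolic_nonneg_bc2_zero)
    then show ?thesis
      by (simp add: restrict_to_V_def bc_of_complex_def)
  qed
  have definite: "?ip x x = 0 \<longleftrightarrow> x = (\<lambda>l. 0)" for x
  proof -
    have "?ip x x = 0 \<longleftrightarrow> sp (V_emb x) (V_emb x) = 0"
      by (simp add: scalar_product_V_emb[OF closed])
    also have "\<dots> \<longleftrightarrow> V_emb x = m_zero"
      by (rule scalar_product_self_eq_zero_iff[OF sp])
    finally show ?thesis
      by (simp add: V_emb_eq_m_zero_iff)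
  qed
  show ?thesis
    unfolding complex_inner_product_def using add mult conj_sym nonneg definite by blast
qed

theorem mainTheorem7:
  fixes sp :: "('n::finite \<Rightarrow> bicomplex) \<Rightarrow> ('n \<Rightarrow> bicomplex) \<Rightarrow> bicomplex"
  assumes "bicomplex_scalar_product sp"
    and "hyperbolic_positive sp"
    and "closed_on_V sp"
  shows "\<exists>ip. (\<forall>x y. sp (V_emb x) (V_emb y) = bc_of_complex (ip x y))
              \<and> complex_inner_product ip"
  using scalar_product_V_emb[OF assms(3)] complex_inner_product_restrict_to_V[OF assms]
  by blast

end
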